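(* Let $\lambda=(\lambda_1,\dots,\lambda_m)$ be a Young diagram with $n$ boxes and let $l\ge 1$ be an integer. Then $$M_{\lambda,2l}\le n(\lambda_1-1)^l\lambda_1^{\,l-1}.$$
   Context: For a Young diagram $\lambda=(\lambda_1,\dots,\lambda_m)$ with $\lambda_1\ge\dots\ge\lambda_m\ge1$, $\sum\lambda_i=n$, and an integer $l\ge 0$, define $M_{\lambda,2l}=\sum_{j=1}^m\big\{(\lambda_j-j)^l(\lambda_j-j+1)^l-j^l(j-1)^l\big\}$. *)

theory Defs
  imports Main
begin

definition young_diagram :: "nat list \<Rightarrow> bool" where
  "young_diagram lam \<longleftrightarrow> sorted_wrt (\<ge>) lam \<and> (\<forall>x\<in>set lam. x \<ge> 1)"

text \<open>M_{lambda,2l} = sum_{j=1}^m ((lambda_j - j)^l (lambda_j - j + 1)^l - j^l (j-1)^l),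
computed in the integers; lambda_j = lam ! (j - 1).\<close>
definition M :: "nat list \<Rightarrow> nat \<Rightarrow> int" where
  "M lam l = (\<Sum>j=1..length lam.
      (int (lam ! (j - 1)) - int j) ^ l * (int (lam ! (j - 1)) - int j + 1) ^ l
      - (int j) ^ l * (int j - 1) ^ l)"

end

theory Submission
  imports Defs
begin

(* The j-th summand of M is  t^l - s^l  with  t = (L - j)(L - j + 1),  s = j(j - 1)  and
   L = lambda_j.  We bound each summand by  L (a - 1)^l a^(l-1),  where  a = lambda_1 >= L:
   - if j <= L then  0 <= t <= (L - 1) L,  so  t^l = t * t^(l-1) <= L(a - 1) * (a(a - 1))^(l-1);
   - if j > L  then  0 <= t <= s,  so the summand is <= 0 <= the bound.
   Summing over the rows, the factors L add up to the number of boxes n. *)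

lemma power_pos_split:
  fixes x :: "'a :: monoid_mult"
  assumes "l \<ge> 1"
  shows "x ^ l = x * x ^ (l - 1)"
  using power_minus_mult[of l x] assms by (simp add: power_commutes)

lemma shifted_product_bounds:
  fixes L a j :: "'a :: linordered_idom"
  assumes "1 \<le> j" "j \<le> L" "L \<le> a"
  shows "0 \<le> (L - j) * (L - j + 1)"
    and "(L - j) * (L - j + 1) \<le> L * (a - 1)"
    and "(L - j) * (L - j + 1) \<le> a * (a - 1)"
proof -
  show "0 \<le> (L - j) * (L - j + 1)" using assms by simp
  have "(L - j) * (L - j + 1) \<le> (L - 1) * L"
    using assms by (intro mult_mono) auto
  also have "\<dots> = L * (L - 1)" by (rule mult.commute)
  also have "\<dots> \<le> L * (a - 1)"
    using assms by (intro mult_left_mono) auto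
  finally show "(L - j) * (L - j + 1) \<le> L * (a - 1)" .
  have "(L - j) * (L - j + 1) \<le> (a - 1) * a"
    using assms by (intro mult_mono) auto
  then show "(L - j) * (L - j + 1) \<le> a * (a - 1)" by (simp add: mult.commute)
qed

text \<open>For a row that ends before column j (L < j), the rising product (L-j)(L-j+1) lies
  between 0 and j(j-1); integrality gives j - L \<ge> 1.\<close>
lemma shifted_product_short_row:
  fixes L j :: int
  assumes "1 \<le> L" "L < j"
  shows "0 \<le> (L - j) * (L - j + 1)" and "(L - j) * (L - j + 1) \<le> j * (j - 1)"
proof -
  have eq: "(L - j) * (L - j + 1) = (j - L) * (j - L - 1)" by (simp add: algebra_simps)
  have "j - L \<ge> 1" using assms by simp
  then show "0 \<le> (L - j) * (L - j + 1)" unfolding eq by simp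
  show "(L - j) * (L - j + 1) \<le> j * (j - 1)"
    unfolding eq using \<open>j - L \<ge> 1\<close> assms by (intro mult_mono) auto
qed

lemma row_term_bound:
  fixes L a j :: int and l :: nat
  assumes "1 \<le> j" "1 \<le> L" "L \<le> a" "l \<ge> 1"
  shows "(L - j) ^ l * (L - j + 1) ^ l - j ^ l * (j - 1) ^ l \<le> L * (a - 1) ^ l * a ^ (l - 1)"
proof -
  define t where "t = (L - j) * (L - j + 1)"
  define s where "s = j * (j - 1)"
  have summand: "(L - j) ^ l * (L - j + 1) ^ l - j ^ l * (j - 1) ^ l = t ^ l - s ^ l"
    by (simp add: t_def s_def power_mult_distrib)
  have s_nonneg: "0 \<le> s" using assms by (simp add: s_def)
  have bound_nonneg: "0 \<le> L * (a - 1) ^ l * a ^ (l - 1)" using assms by simp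
  have bound: "L * (a - 1) ^ l * a ^ (l - 1) = (L * (a - 1)) * (a * (a - 1)) ^ (l - 1)"
    using power_pos_split[OF assms(4), of "a - 1"] by (simp add: power_mult_distrib ac_simps)
  show ?thesis
  proof (cases "j \<le> L")
    case True
    note t = shifted_product_bounds[OF assms(1) True assms(3), folded t_def]
    have "t ^ l = t * t ^ (l - 1)" using power_pos_split[OF assms(4)] .
    also have "\<dots> \<le> (L * (a - 1)) * (a * (a - 1)) ^ (l - 1)"
      using t by (intro mult_mono power_mono) auto
    finally have "t ^ l \<le> L * (a - 1) ^ l * a ^ (l - 1)" by (simp only: bound)
    moreover have "0 \<le> s ^ l" using s_nonneg by simp
    ultimately show ?thesis using summand by linarith
  next
    case False
    note t = shifted_product_short_row[OF assms(2), of j, folded t_def s_def]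
    have "t ^ l \<le> s ^ l" using t False by (simp add: power_mono)
    then show ?thesis using summand bound_nonneg by linarith
  qed
qed

lemma young_diagram_part_bounds:
  assumes "young_diagram lam" "i < length lam"
  shows "1 \<le> lam ! i" and "lam ! i \<le> hd lam"
proof -
  have sorted: "sorted_wrt (\<ge>) lam" and pos: "\<forall>x\<in>set lam. x \<ge> 1"
    using assms(1) by (auto simp: young_diagram_def)
  show "1 \<le> lam ! i" using pos assms(2) by simp
  have "lam \<noteq> []" using assms(2) by auto
  then show "lam ! i \<le> hd lam"
    using sorted_wrt_nth_less[OF sorted, of 0 i] assms(2)
    by (cases i) (auto simp: hd_conv_nth)
qed

lemma sum_rows_eq_sum_list:
  "(\<Sum>j=1..length lam. int (lam ! (j - 1))) = int (sum_list lam)"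
proof -
  have "(\<Sum>j=1..length lam. int (lam ! (j - 1))) = (\<Sum>i<length lam. int (lam ! i))"
    by (rule sum.reindex_bij_witness[where i="\<lambda>i. i + 1" and j="\<lambda>j. j - 1"]) auto
  also have "\<dots> = int (sum_list lam)"
    by (simp add: sum_list_sum_nth atLeast0LessThan)
  finally show ?thesis .
qed

theorem lemma5p10:
  fixes lam :: "nat list" and n l :: nat
  assumes "young_diagram lam"
    and "sum_list lam = n"
    and "lam \<noteq> []"
    and "l \<ge> 1"
  shows "M lam l \<le> int n * (int (hd lam) - 1) ^ l * int (hd lam) ^ (l - 1)"
proof -
  define a where "a = int (hd lam)"
  define c where "c = (a - 1) ^ l * a ^ (l - 1)"
  have "M lam l \<le> (\<Sum>j=1..length lam. int (lam ! (j - 1)) * c)"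
    unfolding M_def c_def mult.assoc[symmetric]
  proof (rule sum_mono)
    fix j assume "j \<in> {1..length lam}"
    then have "j - 1 < length lam" and "1 \<le> int j" by auto
    with young_diagram_part_bounds[OF assms(1)] assms(4)
    show "(int (lam ! (j - 1)) - int j) ^ l * (int (lam ! (j - 1)) - int j + 1) ^ l
        - int j ^ l * (int j - 1) ^ l \<le> int (lam ! (j - 1)) * (a - 1) ^ l * a ^ (l - 1)"
      by (intro row_term_bound) (auto simp: a_def)
  qed
  also have "\<dots> = (\<Sum>j=1..length lam. int (lam ! (j - 1))) * c"
    by (rule sum_distrib_right[symmetric])
  also have "\<dots> = int n * c"
    using sum_rows_eq_sum_list[of lam] assms(2) by simp
  finally show ?thesis by (simp add: a_def c_def mult.assoc)
qed

end
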